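(* Let $p/q$ be a rational number with $q\in\mathbb N$, $\gcd(p,q)=1$, and let $n\in\mathbb N$ with $\gcd(n^2,q)\mid n$. Then for every $y>0$, $$\mathcal R_n\left(\tfrac pq,y\right)=\bigcup_{d\mid n}\mathcal R^{\rm pr}_{n/d}\left(x_d,\tfrac{d^2}{k^2n^2y}\right),$$ for some numbers $x_d\in\mathbb R/\mathbb Z$ depending on $d$ (and on $p,q,n$), where $k=q/\gcd(n,q)$. If moreover $\gcd(n,q)=1$, then for any integers $a,b$ with $an+bq=1$, $$\mathcal R^{\rm pr}_n\left(\tfrac pq,y\right)=\mathcal R^{\rm pr}_n\left(-\tfrac{\overline{pn}\,a}{q},\tfrac{1}{q^2n^2y}\right),$$ where $\overline{pn}$ is an integer representing the multiplicative inverse of $pn$ modulo $q$.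
   Context: $\Gamma=\mathrm{SL}_2(\mathbb Z)$, $\mathcal M=\Gamma\backslash\mathbb H$. For $n\in\mathbb N$, $x\in\mathbb R/\mathbb Z$, $y>0$: $\mathcal R_n(x,y)=\{\Gamma(x+\tfrac jn+iy):0\le j\le n-1\}$ and $\mathcal R^{\rm pr}_n(x,y)=\{\Gamma(x+\tfrac jn+iy):j\in(\mathbb Z/n\mathbb Z)^\times\}$ (for $n=1$, $(\mathbb Z/1\mathbb Z)^\times=\{0\}$). *)

theory Defs
  imports "HOL-Analysis.Analysis" "HOL-Number_Theory.Cong"
begin

definition moebius_int :: "int \<Rightarrow> int \<Rightarrow> int \<Rightarrow> int \<Rightarrow> complex \<Rightarrow> complex" where
  "moebius_int a b c d z = (of_int a * z + of_int b) / (of_int c * z + of_int d)"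

text \<open>The point \<Gamma> z of \<Gamma>\H, represented as the SL2(Z)-orbit of z.\<close>
definition SL2Z_orbit :: "complex \<Rightarrow> complex set" where
  "SL2Z_orbit z = {moebius_int a b c d z | a b c d. a * d - b * c = 1}"

definition R_set :: "nat \<Rightarrow> real \<Rightarrow> real \<Rightarrow> complex set set" where
  "R_set n x y = (\<lambda>j. SL2Z_orbit (Complex (x + real j / real n) y)) ` {0..<n}"

text \<open>R^pr_n(x,y) = {\<Gamma>(x + j/n + iy) : j \<in> (Z/nZ)^\<times>}; for n = 1 this is {0}.\<close>
definition R_pr :: "nat \<Rightarrow> real \<Rightarrow> real \<Rightarrow> complex set set" where
  "R_pr n x y = (\<lambda>j. SL2Z_orbit (Complex (x + real j / real n) y)) ` {j \<in> {0..<n}. coprime j n}"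

end

theory Submission
  imports Defs
begin

text \<open>
  Write \<open>g = gcd n q\<close>, \<open>k = q / g\<close> and \<open>P = p n / g\<close>, so that
  \<open>p/q + j/n = (P + j k)/(k n)\<close>; the hypothesis \<open>gcd (n\<^sup>2) q dvd n\<close> is exactly what makes
  \<open>k\<close> coprime to \<open>n\<close>. Sort the \<open>j\<close> by \<open>d = gcd (P + j k) n\<close> and put \<open>m = n / d\<close>.
  Then \<open>(P + j k)/(k n) = u/v\<close> in lowest terms with \<open>v = k m\<close>, and a matrix of
  \<open>SL\<^sub>2(\<int>)\<close> with bottom row \<open>(v, -u)\<close> maps \<open>u/v + i y\<close> to \<open>\<alpha>/v + i/(v\<^sup>2 y)\<close>, where
  \<open>\<alpha> u \<equiv> -1 (mod v)\<close>. Modulo \<open>k\<close> the residue of \<open>\<alpha>\<close> depends only on \<open>d\<close>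
  (it solves \<open>\<alpha> P \<equiv> -d\<close>), so \<open>\<alpha>/v = c\<^sub>d/v + s/m\<close> for a fixed \<open>c\<^sub>d\<close> divisible by \<open>m\<close>
  and some \<open>s\<close> prime to \<open>m\<close>; conversely every such \<open>s\<close> arises from some \<open>j\<close>.
  For \<open>gcd n q = 1\<close> the primitive \<open>j\<close> are those with \<open>d = 1\<close>, and
  \<open>c\<^sub>1 = - inv a n\<close> works.
\<close>

lemma moebius_int_denominator_nonzero:
  assumes "Im z > 0" "a * d - b * c = 1"
  shows "of_int c * z + of_int d \<noteq> 0"
proof (cases "c = 0")
  case True
  with assms(2) show ?thesis by auto
next
  case False
  then have "Im (of_int c * z + of_int d) \<noteq> 0"
    using assms(1) by simp
  then show ?thesis by force
qed

lemma moebius_int_compose: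
  assumes "Im z > 0" "a' * d' - b' * c' = 1"
  shows "moebius_int a b c d (moebius_int a' b' c' d' z) =
         moebius_int (a * a' + b * c') (a * b' + b * d') (c * a' + d * c') (c * b' + d * d') z"
proof -
  define N where "N = of_int a' * z + of_int b'"
  define D where "D = of_int c' * z + of_int d'"
  have "D \<noteq> 0"
    unfolding D_def by (rule moebius_int_denominator_nonzero[OF assms])
  then have "moebius_int a b c d (N / D) = (of_int a * N + of_int b * D) / (of_int c * N + of_int d * D)"
    unfolding moebius_int_def by (simp add: divide_simps)
  then show ?thesis
    unfolding moebius_int_def N_def D_def by (simp add: algebra_simps)
qed

lemma SL2Z_orbit_moebius_subset:
  assumes "Im z > 0" "a * d - b * c = 1"
  shows "SL2Z_orbit (moebius_int a b c d z) \<subseteq> SL2Z_orbit z"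
proof
  fix w assume "w \<in> SL2Z_orbit (moebius_int a b c d z)"
  then obtain a' b' c' d' where w: "w = moebius_int a' b' c' d' (moebius_int a b c d z)"
    and det: "a' * d' - b' * c' = 1"
    unfolding SL2Z_orbit_def by blast
  have "(a' * a + b' * c) * (c' * b + d' * d) - (a' * b + b' * d) * (c' * a + d' * c)
        = (a' * d' - b' * c') * (a * d - b * c)"
    by (simp add: algebra_simps)
  with det assms(2) w moebius_int_compose[OF assms] show "w \<in> SL2Z_orbit z"
    unfolding SL2Z_orbit_def by auto
qed

lemma SL2Z_orbit_moebius:
  assumes "Im z > 0" "Im w > 0" "a * d - b * c = 1" "w = moebius_int a b c d z"
  shows "SL2Z_orbit w = SL2Z_orbit z"
proof
  show "SL2Z_orbit w \<subseteq> SL2Z_orbit z"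
    using SL2Z_orbit_moebius_subset[OF assms(1,3)] assms(4) by simp
  have "moebius_int d (- b) (- c) a w = moebius_int 1 0 0 1 z"
    using moebius_int_compose[OF assms(1,3), of d "- b" "- c" a] assms(3,4)
    by (simp add: algebra_simps)
  then have "z = moebius_int d (- b) (- c) a w"
    by (simp add: moebius_int_def)
  moreover have "d * a - (- b) * (- c) = 1"
    using assms(3) by (simp add: algebra_simps)
  ultimately show "SL2Z_orbit z \<subseteq> SL2Z_orbit w"
    using SL2Z_orbit_moebius_subset[OF assms(2)] by simp
qed

lemma SL2Z_orbit_translate:
  assumes "y > 0"
  shows "SL2Z_orbit (Complex (x + of_int t) y) = SL2Z_orbit (Complex x y)"
  by (rule SL2Z_orbit_moebius[where a = 1 and b = t and c = 0 and d = 1])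
     (use assms in \<open>simp_all add: moebius_int_def complex_eq_iff\<close>)

lemma SL2Z_orbit_flip:
  fixes u v \<alpha> :: int
  assumes "y > 0" "v > 0" "[\<alpha> * u = - 1] (mod v)"
  shows "SL2Z_orbit (Complex (of_int u / of_int v) y) =
         SL2Z_orbit (Complex (of_int \<alpha> / of_int v) (1 / ((of_int v)\<^sup>2 * y)))"
proof -
  obtain t where t: "\<alpha> * u + 1 = v * t"
    using assms(3) by (metis cong_iff_dvd_diff diff_minus_eq_add dvdE)
  then have t_real: "real_of_int t = (of_int \<alpha> * of_int u + 1) / of_int v"
    using assms(2) by (simp add: field_simps flip: of_int_mult of_int_add)
  have det: "\<alpha> * (- u) - (- t) * v = 1"
    using t by (simp add: algebra_simps)
  have flip: "Complex (of_int \<alpha> / of_int v) (1 / ((of_int v)\<^sup>2 * y)) =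
        moebius_int \<alpha> (- t) v (- u) (Complex (of_int u / of_int v) y)"
    using assms(1,2) unfolding moebius_int_def
    by (simp add: complex_eq_iff Complex_divide t_real field_simps power2_eq_square)
  show ?thesis
    using SL2Z_orbit_moebius[OF _ _ det flip] assms(1,2) by simp
qed

lemma SL2Z_orbit_image_residues:
  fixes S :: "int \<Rightarrow> bool" and m :: nat
  assumes "m > 0" "y > 0" "\<And>j. S (j mod int m) = S j"
  shows "(\<lambda>j. SL2Z_orbit (Complex (x + real j / real m) y)) ` {j \<in> {0..<m}. S (int j)} =
         (\<lambda>j. SL2Z_orbit (Complex (x + of_int j / real m) y)) ` {j. S j}"
proof (intro equalityI subsetI)
  fix z assume "z \<in> (\<lambda>j. SL2Z_orbit (Complex (x + real j / real m) y)) ` {j \<in> {0..<m}. S (int j)}"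
  then obtain j where "S (int j)" "z = SL2Z_orbit (Complex (x + of_int (int j) / real m) y)"
    by auto
  then show "z \<in> (\<lambda>j. SL2Z_orbit (Complex (x + of_int j / real m) y)) ` {j. S j}"
    by blast
next
  fix z assume "z \<in> (\<lambda>j. SL2Z_orbit (Complex (x + of_int j / real m) y)) ` {j. S j}"
  then obtain j where j: "S j" "z = SL2Z_orbit (Complex (x + of_int j / real m) y)"
    by auto
  define r where "r = nat (j mod int m)"
  have r: "int r = j mod int m" "r < m"
    using assms(1) unfolding r_def by (simp_all add: nat_less_iff)
  have "real_of_int j = of_int (j div int m) * real m + real r"
    using arg_cong[OF div_mult_mod_eq[of j "int m"], of real_of_int]
    by (simp only: of_int_add of_int_mult of_int_of_nat_eq flip: r(1))
  then have shift: "x + of_int j / real m = (x + real r / real m) + of_int (j div int m)"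
    using assms(1) by (simp add: field_simps)
  have "z = SL2Z_orbit (Complex (x + real r / real m) y)"
    unfolding j(2) shift by (rule SL2Z_orbit_translate[OF assms(2)])
  moreover have "S (int r)"
    using j(1) r(1) assms(3) by simp
  ultimately show "z \<in> (\<lambda>j. SL2Z_orbit (Complex (x + real j / real m) y)) ` {j \<in> {0..<m}. S (int j)}"
    using r(2) by auto
qed

lemma R_set_eq_image_int:
  assumes "m > 0" "y > 0"
  shows "R_set m x y = (\<lambda>j. SL2Z_orbit (Complex (x + of_int j / real m) y)) ` UNIV"
  using SL2Z_orbit_image_residues[OF assms, of "\<lambda>_. True" x] unfolding R_set_def
  by (simp add: atLeast0LessThan lessThan_def)

lemma R_pr_eq_image_coprime_int:
  assumes "m > 0" "y > 0"
  shows "R_pr m x y = (\<lambda>j. SL2Z_orbit (Complex (x + of_int j / real m) y)) ` {j. coprime j (int m)}"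
  using SL2Z_orbit_image_residues[OF assms, of "\<lambda>j. coprime j (int m)" x] assms(1)
  unfolding R_pr_def by (simp add: coprime_int_iff)

lemma coprime_if_cong_mult_eq_minus_one:
  fixes a b m :: int
  assumes "[a * b = - 1] (mod m)"
  shows "coprime a m"
proof -
  have "[a * (- b) = 1] (mod m)"
    using assms cong_minus_minus_iff[of "a * b" "- 1" m] by simp
  then show ?thesis
    unfolding coprime_iff_invertible_int ..
qed

lemma exists_cong_mult_eq_minus_one:
  fixes u v :: int
  assumes "coprime u v"
  shows "\<exists>\<alpha>. [\<alpha> * u = - 1] (mod v)"
proof -
  obtain x where "[u * x = 1] (mod v)"
    using cong_solve_coprime_int[OF assms] by blast
  then have "[(- x) * u = - 1] (mod v)"
    using cong_minus_minus_iff[of "u * x" 1 v] by (simp add: mult.commute)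
  then show ?thesis ..
qed

lemma SL2Z_orbit_flip_scaled:
  fixes K m d c s u :: int
  assumes "y > 0" "K > 0" "m > 0" "d > 0" "[(c + K * s) * u = - 1] (mod K * m)"
  shows "SL2Z_orbit (Complex (of_int (d * u) / (of_int K * (of_int d * of_int m))) y) =
         SL2Z_orbit (Complex (of_int c / (of_int K * of_int m) + of_int s / of_int m)
           (1 / (of_int K ^ 2 * of_int m ^ 2 * y)))"
proof -
  have "K * m > 0"
    using assms(2,3) by simp
  moreover have "of_int u / of_int (K * m) = (of_int (d * u) / (of_int K * (of_int d * of_int m)) :: real)"
    using assms(4) by simp
  moreover have "of_int (c + K * s) / of_int (K * m) =
                 of_int c / (of_int K * of_int m) + (of_int s / of_int m :: real)"
    using assms(2,3) by (simp add: field_simps)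
  moreover have "(of_int (K * m))\<^sup>2 = (of_int K ^ 2 * of_int m ^ 2 :: real)"
    by (simp add: power_mult_distrib)
  ultimately show ?thesis
    using SL2Z_orbit_flip[OF assms(1) _ assms(5)] by metis
qed

lemma gcd_class_orbit_to_primitive:
  fixes K m d M c :: int
  assumes "y > 0" "K > 0" "m > 0" "d > 0" "coprime K m" "coprime M K" "gcd M (d * m) = d"
    and "m dvd c" "[c * M = - d] (mod K)"
  shows "\<exists>s. coprime s m \<and>
    SL2Z_orbit (Complex (of_int M / (of_int K * (of_int d * of_int m))) y) =
    SL2Z_orbit (Complex (of_int c / (of_int K * of_int m) + of_int s / of_int m)
      (1 / (of_int K ^ 2 * of_int m ^ 2 * y)))"
proof -
  obtain u where M: "M = d * u"
    using assms(7) by (metis gcd_dvd1 dvdE)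
  have "d * gcd u m = d"
    using assms(4,7) by (simp add: M flip: gcd_mult_distrib_int)
  then have "coprime u m"
    using assms(4) by (simp add: coprime_iff_gcd_eq_1)
  moreover have "coprime u K"
    using assms(6) by (simp add: M)
  ultimately have "coprime u (K * m)"
    by simp
  then obtain \<alpha> where \<alpha>: "[\<alpha> * u = - 1] (mod K * m)"
    using exists_cong_mult_eq_minus_one by blast
  have "[d * (\<alpha> * u) = d * (- 1)] (mod K)"
    using cong_dvd_mono_modulus[OF \<alpha> dvd_triv_left] by (rule cong_scalar_left)
  then have "[\<alpha> * M = - d] (mod K)"
    by (simp add: M ac_simps)
  then have "[\<alpha> * M = c * M] (mod K)"
    using assms(9) cong_sym cong_trans by blast
  then have "[\<alpha> = c] (mod K)"
    using assms(6) by (simp add: cong_mult_rcancel)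
  then have "K dvd \<alpha> - c"
    by (simp add: cong_iff_dvd_diff)
  then obtain s where s: "\<alpha> = c + K * s"
    by (metis dvdE add.commute diff_eq_eq)
  have "coprime \<alpha> m"
    using coprime_if_cong_mult_eq_minus_one[OF \<alpha>] by simp
  moreover have "[\<alpha> = K * s] (mod m)"
    using assms(8) by (simp add: s cong_iff_dvd_diff)
  ultimately have "coprime (K * s) m"
    using cong_imp_coprime by blast
  then have "coprime s m"
    by simp
  moreover have "SL2Z_orbit (Complex (of_int M / (of_int K * (of_int d * of_int m))) y) =
    SL2Z_orbit (Complex (of_int c / (of_int K * of_int m) + of_int s / of_int m)
      (1 / (of_int K ^ 2 * of_int m ^ 2 * y)))"
    unfolding M using \<alpha> s assms(1-4) by (intro SL2Z_orbit_flip_scaled) auto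
  ultimately show ?thesis
    by blast
qed

lemma primitive_orbit_to_gcd_class:
  fixes K m d P c s :: int
  assumes "y > 0" "K > 0" "m > 0" "d > 0" "coprime K m" "coprime d K"
    and "m dvd c" "[c * P = - d] (mod K)" "coprime s m"
  shows "\<exists>M. [M = P] (mod K) \<and> gcd M (d * m) = d \<and>
    SL2Z_orbit (Complex (of_int M / (of_int K * (of_int d * of_int m))) y) =
    SL2Z_orbit (Complex (of_int c / (of_int K * of_int m) + of_int s / of_int m)
      (1 / (of_int K ^ 2 * of_int m ^ 2 * y)))"
proof -
  define \<alpha> where "\<alpha> = c + K * s"
  have "coprime (c * P) K"
    using assms(6,8) cong_imp_coprime[of "- d" "c * P" K] by (simp add: cong_sym)
  then have "coprime \<alpha> K"
    using cong_imp_coprime[of c \<alpha> K] by (simp add: \<alpha>_def cong_iff_dvd_diff)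
  moreover have "coprime \<alpha> m"
    using assms(5,7,9) cong_imp_coprime[of "K * s" \<alpha> m] by (simp add: \<alpha>_def cong_iff_dvd_diff)
  ultimately have "coprime \<alpha> (K * m)"
    by simp
  then obtain u where u: "[\<alpha> * u = - 1] (mod K * m)"
    by (metis exists_cong_mult_eq_minus_one mult.commute)
  have "[c * u = \<alpha> * u] (mod K)"
    by (simp add: \<alpha>_def cong_iff_dvd_diff algebra_simps)
  then have "[c * u = - 1] (mod K)"
    using cong_dvd_mono_modulus[OF u dvd_triv_left] cong_trans by blast
  then have "[(c * P) * u = - P] (mod K)"
    using cong_scalar_right[of "c * u" "- 1" K P] by (simp add: ac_simps)
  moreover have "[(c * P) * u = - (d * u)] (mod K)"
    using cong_scalar_right[OF assms(8), of u] by simp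
  ultimately have "[- (d * u) = - P] (mod K)"
    using cong_sym cong_trans by blast
  then have "[d * u = P] (mod K)"
    by (simp only: cong_minus_minus_iff)
  moreover have "gcd (d * u) (d * m) = d"
  proof -
    have "coprime u m"
      using coprime_if_cong_mult_eq_minus_one[of u \<alpha> "K * m"] u by (simp add: mult.commute)
    then show ?thesis
      using assms(4) by (simp add: coprime_iff_gcd_eq_1 flip: gcd_mult_distrib_int)
  qed
  moreover have "SL2Z_orbit (Complex (of_int (d * u) / (of_int K * (of_int d * of_int m))) y) =
    SL2Z_orbit (Complex (of_int c / (of_int K * of_int m) + of_int s / of_int m)
      (1 / (of_int K ^ 2 * of_int m ^ 2 * y)))"
    using u assms(1-4) unfolding \<alpha>_def by (intro SL2Z_orbit_flip_scaled) auto
  ultimately show ?thesis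
    by blast
qed

lemma gcd_class_orbits_eq_R_pr:
  fixes K P c :: int and n d m :: nat
  assumes "y > 0" "K > 0" "n = d * m" "n > 0" "coprime K (int n)" "coprime P K"
    and "int m dvd c" "[c * P = - int d] (mod K)"
  shows "(\<lambda>j. SL2Z_orbit (Complex (of_int (P + j * K) / (of_int K * real n)) y)) `
           {j. gcd (P + j * K) (int n) = int d} =
         R_pr m (of_int c / (of_int K * real m)) (1 / (of_int K ^ 2 * real m ^ 2 * y))"
proof -
  have pos: "int d > 0" "int m > 0" "1 / (of_int K ^ 2 * real m ^ 2 * y) > 0"
    using assms(1-4) by auto
  have coprime: "coprime K (int m)" "coprime (int d) K"
    using assms(3,5) by (auto simp: coprime_commute)
  have n: "real n = of_int (int d) * of_int (int m)" "int n = int d * int m"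
    using assms(3) by simp_all
  have P_shift: "[P + j * K = P] (mod K)" for j
    by (simp add: cong_iff_dvd_diff)
  show ?thesis
    unfolding R_pr_eq_image_coprime_int[OF pos(2)[simplified] pos(3)]
  proof (intro equalityI subsetI)
    fix z assume "z \<in> (\<lambda>j. SL2Z_orbit (Complex (of_int (P + j * K) / (of_int K * real n)) y)) `
                        {j. gcd (P + j * K) (int n) = int d}"
    then obtain j where j: "gcd (P + j * K) (int d * int m) = int d"
      and z: "z = SL2Z_orbit (Complex (of_int (P + j * K) / (of_int K * real n)) y)"
      by (auto simp: n(2))
    have "coprime (P + j * K) K"
      using assms(6) P_shift cong_imp_coprime cong_sym by blast
    moreover have "[c * (P + j * K) = - int d] (mod K)"
      using cong_scalar_left[OF P_shift, of c] assms(8) cong_trans by blast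
    ultimately obtain s where "coprime s (int m)" "z = SL2Z_orbit
        (Complex (of_int c / (of_int K * real m) + of_int s / real m) (1 / (of_int K ^ 2 * real m ^ 2 * y)))"
      using gcd_class_orbit_to_primitive[OF assms(1,2) pos(2,1) coprime(1) _ j assms(7)]
      unfolding z n(1) by auto
    then show "z \<in> (\<lambda>s. SL2Z_orbit (Complex (of_int c / (of_int K * real m) + of_int s / real m)
                        (1 / (of_int K ^ 2 * real m ^ 2 * y)))) ` {s. coprime s (int m)}"
      by blast
  next
    fix z assume "z \<in> (\<lambda>s. SL2Z_orbit (Complex (of_int c / (of_int K * real m) + of_int s / real m)
                        (1 / (of_int K ^ 2 * real m ^ 2 * y)))) ` {s. coprime s (int m)}"
    then obtain s where s: "coprime s (int m)"
      and z: "z = SL2Z_orbit (Complex (of_int c / (of_int K * real m) + of_int s / real m)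
                        (1 / (of_int K ^ 2 * real m ^ 2 * y)))"
      by auto
    obtain M where M: "[M = P] (mod K)" "gcd M (int d * int m) = int d"
      and orbit: "SL2Z_orbit (Complex (of_int M / (of_int K * real n)) y) = z"
      using primitive_orbit_to_gcd_class[OF assms(1,2) pos(2,1) coprime assms(7,8) s]
      unfolding z n(1) by auto
    obtain j where "M = P + j * K"
      using M(1) by (metis cong_iff_dvd_diff dvdE cong_sym add.commute diff_eq_eq mult.commute)
    then show "z \<in> (\<lambda>j. SL2Z_orbit (Complex (of_int (P + j * K) / (of_int K * real n)) y)) `
                  {j. gcd (P + j * K) (int n) = int d}"
      using M(2) orbit by (auto simp: n(2))
  qed
qed

lemma coprime_reduced_denominator:
  fixes n q :: nat
  assumes "n > 0" "gcd (n\<^sup>2) q dvd n"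
  shows "coprime (q div gcd n q) n"
proof -
  define g where "g = gcd n q"
  define h where "h = gcd (q div g) n"
  have "g > 0"
    using assms(1) by (simp add: g_def)
  have "g * h dvd g * (q div g)"
    unfolding h_def by simp
  then have "g * h dvd q"
    by (simp add: g_def)
  moreover have "g * h dvd n\<^sup>2"
    unfolding power2_eq_square g_def h_def by (intro mult_dvd_mono) simp_all
  ultimately have "g * h dvd gcd (n\<^sup>2) q"
    by (rule gcd_greatest[rotated])
  then have "g * h dvd n"
    using assms(2) by (rule dvd_trans)
  then have "g * h dvd g * 1"
    using \<open>g * h dvd q\<close> by (simp add: g_def)
  then have "h = 1"
    using \<open>g > 0\<close> by (simp only: nat_mult_dvd_cancel1 nat_dvd_1_iff_1)
  then show ?thesis
    by (simp add: h_def g_def coprime_iff_gcd_eq_1)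
qed

lemma exists_multiple_cong_mult_eq_neg:
  fixes P K m d :: int
  assumes "coprime P K" "coprime m K"
  shows "\<exists>c. m dvd c \<and> [c * P = - d] (mod K)"
proof -
  have "coprime (m * P) K"
    using assms by simp
  then obtain w where "[(m * P) * w = 1] (mod K)"
    using cong_solve_coprime_int by blast
  then have "[- d * ((m * P) * w) = - d * 1] (mod K)"
    by (rule cong_scalar_left)
  moreover have "- d * ((m * P) * w) = (m * (- d * w)) * P"
    by (simp add: algebra_simps)
  ultimately have "[(m * (- d * w)) * P = - d * 1] (mod K)"
    by (simp only:)
  then show ?thesis
    by (intro exI[of _ "m * (- d * w)"]) simp
qed

lemma R_set_decomposition:
  fixes p :: int and q n :: nat
  assumes "q \<ge> 1" "n \<ge> 1" "coprime p (int q)" "gcd (n\<^sup>2) q dvd n"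
  shows "\<exists>x :: nat \<Rightarrow> real. \<forall>y > 0.
            R_set n (real_of_int p / real q) y =
              (\<Union>d \<in> {d. d dvd n}.
                 R_pr (n div d) (x d)
                   (real d ^ 2 / (real (q div gcd n q) ^ 2 * real n ^ 2 * y)))"
proof -
  define g where "g = gcd n q"
  define k where "k = q div g"
  define K where "K = int k"
  define P where "P = p * int (n div g)"
  have q_nat: "q = g * k"
    by (simp add: g_def k_def)
  then have q: "real q = real g * real k" and n: "real n = real g * real (n div g)"
    by (simp_all add: g_def flip: of_nat_mult)
  have n_pos: "n > 0"
    using assms(2) by simp
  moreover have "n = g * (n div g)"
    by (simp add: g_def)
  ultimately have "real g > 0" "real (n div g) > 0"
    by (metis nat_0_less_mult_iff of_nat_0_less_iff)+
  have K: "K > 0"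
    using assms(1) q_nat by (cases "k = 0") (auto simp: K_def)
  have coprime_K_n: "coprime K (int n)"
    using coprime_reduced_denominator[OF n_pos assms(4)] by (simp add: K_def k_def g_def)
  have coprime_divisor: "coprime (int (n div d)) K" if "d dvd n" for d
    using coprime_K_n that by (metis coprime_commute coprime_mult_right_iff dvd_mult_div_cancel of_nat_mult)
  have "coprime p K"
    using assms(3) unfolding q_nat K_def by simp
  then have coprime_P_K: "coprime P K"
    using coprime_divisor[of g] by (simp add: P_def g_def)
  have "\<forall>d. \<exists>c. d dvd n \<longrightarrow> int (n div d) dvd c \<and> [c * P = - int d] (mod K)"
    using exists_multiple_cong_mult_eq_neg[OF coprime_P_K coprime_divisor] by blast
  from choice[OF this] obtain c
    where c: "\<forall>d. d dvd n \<longrightarrow> int (n div d) dvd c d \<and> [c d * P = - int d] (mod K)"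
    by blast
  show ?thesis
  proof (intro exI allI impI)
    fix y :: real assume y: "y > 0"
    define orbit where "orbit j = SL2Z_orbit (Complex (of_int (P + j * K) / (of_int K * real n)) y)" for j
    define gcd_class where "gcd_class d = {j. gcd (P + j * K) (int n) = int d}" for d
    have "real_of_int p / real q + of_int j / real n = of_int (P + j * K) / (of_int K * real n)" for j
      using K \<open>real g > 0\<close> \<open>real (n div g) > 0\<close> q n by (simp add: P_def K_def field_simps)
    then have "R_set n (real_of_int p / real q) y = orbit ` UNIV"
      unfolding R_set_eq_image_int[OF n_pos y] orbit_def by simp
    also have "UNIV = (\<Union>d \<in> {d. d dvd n}. gcd_class d)"
    proof (intro equalityI subsetI)
      fix j :: int
      have "int (nat (gcd (P + j * K) (int n))) dvd int n"
        by simp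
      then show "j \<in> (\<Union>d \<in> {d. d dvd n}. gcd_class d)"
        unfolding gcd_class_def int_dvd_int_iff by (intro UN_I[of "nat (gcd (P + j * K) (int n))"]) simp_all
    qed simp
    also have "orbit ` (\<Union>d \<in> {d. d dvd n}. gcd_class d) = (\<Union>d \<in> {d. d dvd n}. orbit ` gcd_class d)"
      by (rule image_UN)
    also have "\<dots> = (\<Union>d \<in> {d. d dvd n}. R_pr (n div d) (of_int (c d) / (of_int K * real (n div d)))
                        (real d ^ 2 / (real (q div gcd n q) ^ 2 * real n ^ 2 * y)))"
    proof (rule SUP_cong)
      fix d assume "d \<in> {d. d dvd n}"
      then have d: "d dvd n" "n = d * (n div d)" "d > 0"
        using n_pos by auto
      then have "real n = real d * real (n div d)" "real (n div d) > 0"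
        using n_pos by (metis of_nat_mult, metis nat_0_less_mult_iff of_nat_0_less_iff)
      then have "1 / (of_int K ^ 2 * real (n div d) ^ 2 * y) =
                 real d ^ 2 / (real (q div gcd n q) ^ 2 * real n ^ 2 * y)"
        using d(3) K y by (simp add: K_def k_def g_def field_simps power_mult_distrib)
      then show "orbit ` gcd_class d = R_pr (n div d) (of_int (c d) / (of_int K * real (n div d)))
                   (real d ^ 2 / (real (q div gcd n q) ^ 2 * real n ^ 2 * y))"
        using gcd_class_orbits_eq_R_pr[OF y K d(2) n_pos coprime_K_n coprime_P_K] c d(1)
        unfolding orbit_def gcd_class_def by simp
    qed simp
    finally show "R_set n (real_of_int p / real q) y =
        (\<Union>d \<in> {d. d dvd n}. R_pr (n div d) (of_int (c d) / (of_int K * real (n div d)))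
           (real d ^ 2 / (real (q div gcd n q) ^ 2 * real n ^ 2 * y)))" .
  qed
qed

lemma R_pr_flip_coprime_denominator:
  fixes p a b inv :: int and q n :: nat and y :: real
  assumes "q \<ge> 1" "n \<ge> 1" "coprime p (int q)" "gcd n q = 1"
    and "a * int n + b * int q = 1" "[p * int n * inv = 1] (mod int q)" "y > 0"
  shows "R_pr n (real_of_int p / real q) y =
         R_pr n (- real_of_int (inv * a) / real q) (1 / (real q ^ 2 * real n ^ 2 * y))"
proof -
  define P where "P = p * int n"
  define c where "c = - (inv * a * int n)"
  have pos: "int q > 0" "n > 0"
    using assms(1,2) by simp_all
  have coprime_q_n: "coprime (int q) (int n)"
    using assms(4) by (simp add: coprime_iff_gcd_eq_1 gcd.commute)
  have "coprime (int n) (int q)"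
    using coprime_q_n by (simp add: coprime_commute)
  then have coprime_P_q: "coprime P (int q)"
    using assms(3) by (simp add: P_def)
  have "a * int n - 1 = int q * (- b)"
    using assms(5) by (simp add: algebra_simps)
  then have "[a * int n = 1] (mod int q)"
    unfolding cong_iff_dvd_diff by (rule dvdI)
  then have "[(p * int n * inv) * (a * int n) = 1 * 1] (mod int q)"
    using assms(6) by (intro cong_mult)
  then have "[- ((p * int n * inv) * (a * int n)) = - 1] (mod int q)"
    by (simp only: cong_minus_minus_iff) simp
  moreover have "c * P = - ((p * int n * inv) * (a * int n))"
    by (simp add: c_def P_def algebra_simps)
  ultimately have cP: "[c * P = - int 1] (mod int q)"
    by simp
  have "gcd (P + j * int q) (int n) = 1 \<longleftrightarrow> coprime j (int n)" for j
  proof -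
    have "gcd (P + j * int q) (int n) = gcd (int n) (p * int n + j * int q)"
      unfolding P_def by (rule gcd.commute)
    also have "\<dots> = gcd (int n) (j * int q)"
      by (rule gcd_add_mult)
    also have "\<dots> = 1 \<longleftrightarrow> coprime j (int n)"
      using coprime_q_n by (simp add: coprime_iff_gcd_eq_1[symmetric] coprime_commute)
    finally show ?thesis .
  qed
  moreover have "real_of_int p / real q + of_int j / real n = of_int (P + j * int q) / (real q * real n)" for j
    using pos by (simp add: P_def field_simps)
  ultimately have "R_pr n (real_of_int p / real q) y =
      (\<lambda>j. SL2Z_orbit (Complex (of_int (P + j * int q) / (of_int (int q) * real n)) y)) `
        {j. gcd (P + j * int q) (int n) = int 1}"
    unfolding R_pr_eq_image_coprime_int[OF pos(2) assms(7)] by simp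
  also have "\<dots> = R_pr n (of_int c / (of_int (int q) * real n)) (1 / (of_int (int q) ^ 2 * real n ^ 2 * y))"
    using gcd_class_orbits_eq_R_pr[OF assms(7) pos(1) _ pos(2) coprime_q_n coprime_P_q _ cP] by (simp add: c_def)
  also have "of_int c / (of_int (int q) * real n) = - real_of_int (inv * a) / real q"
    using pos by (simp add: c_def field_simps)
  finally show ?thesis
    by simp
qed

theorem proposition3p7:
  fixes p :: int and q n :: nat
  assumes "q \<ge> 1" and "n \<ge> 1" and "coprime p (int q)"
    and "gcd (n^2) q dvd n"
  shows "(\<exists>x :: nat \<Rightarrow> real. \<forall>y > 0.
            R_set n (real_of_int p / real q) y =
              (\<Union>d \<in> {d. d dvd n}.
                 R_pr (n div d) (x d)
                   (real d ^ 2 / (real (q div gcd n q) ^ 2 * real n ^ 2 * y))))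
       \<and> (gcd n q = 1 \<longrightarrow>
            (\<forall>a b inv :: int. \<forall>y :: real.
               a * int n + b * int q = 1 \<longrightarrow> [p * int n * inv = 1] (mod int q) \<longrightarrow> y > 0 \<longrightarrow>
               R_pr n (real_of_int p / real q) y =
               R_pr n (- real_of_int (inv * a) / real q) (1 / (real q ^ 2 * real n ^ 2 * y))))"
proof (intro conjI impI allI)
  show "\<exists>x :: nat \<Rightarrow> real. \<forall>y > 0.
          R_set n (real_of_int p / real q) y =
            (\<Union>d \<in> {d. d dvd n}.
               R_pr (n div d) (x d) (real d ^ 2 / (real (q div gcd n q) ^ 2 * real n ^ 2 * y)))"
    by (rule R_set_decomposition[OF assms])
next
  fix a b inv :: int and y :: real
  assume "gcd n q = 1" "a * int n + b * int q = 1" "[p * int n * inv = 1] (mod int q)" "y > 0"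
  then show "R_pr n (real_of_int p / real q) y =
             R_pr n (- real_of_int (inv * a) / real q) (1 / (real q ^ 2 * real n ^ 2 * y))"
    by (rule R_pr_flip_coprime_denominator[OF assms(1-3)])
qed

end
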